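(* Let $h>0$ and $\lambda_1\in\mathbb{C}\setminus\{0\}$. Let $(U_n(t),R_n(t),Q_n(t))_{n\in\mathbb{Z}}$ be a solution of the semi-discrete massive Thirring model (MTM) system (defined in the context). Let $\Phi_n(t)=(f_n(t),g_n(t))^T$, $n\in\mathbb{Z}$, be a nonzero solution of both equations of the Lax pair at $\lambda=\lambda_1$ with these potentials. Define $$U^{[1]}_n = -\frac{2\mathrm{i} (\bar{\lambda}_1 |f_n|^2 + \lambda_1 |g_n|^2) U_n - h |\lambda_1|^2 (\lambda_1 |f_n|^2 + \bar{\lambda}_1 |g_n|^2) U_n + 2\mathrm{i} (\lambda_1^2 - \bar{\lambda}_1^2) f_n \bar{g}_n}{2\mathrm{i} (\lambda_1 |f_n|^2 + \bar{\lambda}_1 |g_n|^2) - h |\lambda_1|^2 (\bar{\lambda}_1 |f_n|^2 + \lambda_1 |g_n|^2) + h (\lambda_1^2 - \bar{\lambda}_1^2) \bar{f}_n g_n U_n},$$ $$R^{[1]}_{n} = -\frac{( \bar{\lambda}_1 |f_{n}|^2 + \lambda_1 |g_{n}|^2) R_n + (\lambda_1^2-\bar{\lambda}_1^2) f_{n} \bar{g}_{n}}{\lambda_1 |f_{n}|^2 + \bar{\lambda}_1 |g_{n}|^2},$$ $$Q^{[1]}_{n} = -\frac{|\lambda_1|^2 ( \lambda_1 |f_{n}|^2+\bar{\lambda}_1 |g_{n}|^2) Q_n + (\lambda_1^2-\bar{\lambda}_1^2) f_{n} \bar{g}_{n}}{|\lambda_1|^2(\bar{\lambda}_1 |f_{n}|^2+\lambda_1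 |g_{n}|^2)},$$ at all $(n,t)$ where the denominators are nonzero. Then $(U^{[1]}_n,R^{[1]}_n,Q^{[1]}_n)$ is again a solution of the semi-discrete MTM system.
   Context: Fix a lattice spacing $h>0$. The semi-discrete MTM system for complex-valued differentiable functions $U_n(t),R_n(t),Q_n(t)$, $n\in\mathbb{Z}$, $t\in\mathbb{R}$, is $$4\mathrm{i}\frac{dU_n}{dt}+Q_{n+1}+Q_n+\frac{2\mathrm{i}}{h}(R_{n+1}-R_n)+U_n^2(\bar R_n+\bar R_{n+1})-U_n(|Q_{n+1}|^2+|Q_n|^2+|R_{n+1}|^2+|R_n|^2)-\frac{\mathrm{i}h}{2}U_n^2(\bar Q_{n+1}-\bar Q_n)=0,$$ $$-\frac{2\mathrm{i}}{h}(Q_{n+1}-Q_n)+2U_n-|U_n|^2(Q_{n+1}+Q_n)=0,\qquad R_{n+1}+R_n-2U_n+\frac{\mathrm{i}h}{2}|U_n|^2(R_{n+1}-R_n)=0.$$ The Lax pair with spectral parameter $\lambda\in\mathbb{C}\setminus\{0\}$ consists of the two linear equations for $\Phi_n(t)\in\mathbb{C}^2$: $$\Phi_{n+1}=N_n(\lambda)\Phi_n,\quad N_n(\lambda)=\begin{pmatrix}\lambda+\frac{2\mathrm{i}}{h\lambda}S_n & \frac{2U_n}{1-\frac{\mathrm{i}}{2}h|U_n|^2}\\ \frac{2\bar U_n}{1-\frac{\mathrm{i}}{2}h|U_n|^2} & \frac{2\mathrm{i}}{h\lambda}-\lambda S_n\end{pmatrix},\quad S_n=\frac{1+\frac{\mathrm{i}}{2}h|U_n|^2}{1-\frac{\mathrm{i}}{2}h|U_n|^2},$$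 $$\frac{d\Phi_n}{dt}=P_n(\lambda)\Phi_n,\quad P_n(\lambda)=\frac{\mathrm{i}}{2}\begin{pmatrix}\lambda^2-|R_n|^2 & \lambda R_n-Q_n\lambda^{-1}\\ \lambda\bar R_n-\bar Q_n\lambda^{-1} & |Q_n|^2-\lambda^{-2}\end{pmatrix}.$$ The semi-discrete MTM system is the compatibility condition $\frac{d}{dt}N_n=P_{n+1}N_n-N_nP_n$ of this Lax pair. *)

theory Defs
  imports "HOL-Analysis.Analysis"
begin

definition asq :: "complex \<Rightarrow> complex" where
  "asq z = complex_of_real ((cmod z)^2)"

text \<open>The three equations of the semi-discrete MTM system at lattice site n and time t,
  where D stands for dU_n/dt.\<close>
definition mtm_eqs ::
  "real \<Rightarrow> (int \<Rightarrow> real \<Rightarrow> complex) \<Rightarrow> (int \<Rightarrow> real \<Rightarrow> complex) \<Rightarrow> (int \<Rightarrow> real \<Rightarrow> complex)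
    \<Rightarrow> int \<Rightarrow> real \<Rightarrow> complex \<Rightarrow> bool" where
  "mtm_eqs h U R Q n t D \<longleftrightarrow>
     (let u = U n t; r0 = R n t; r1 = R (n+1) t; q0 = Q n t; q1 = Q (n+1) t; hc = complex_of_real h in
      4 * \<i> * D + q1 + q0 + (2 * \<i> / hc) * (r1 - r0) + u^2 * (cnj r0 + cnj r1)
        - u * (asq q1 + asq q0 + asq r1 + asq r0) - (\<i> * hc / 2) * u^2 * (cnj q1 - cnj q0) = 0
      \<and> - (2 * \<i> / hc) * (q1 - q0) + 2 * u - asq u * (q1 + q0) = 0
      \<and> r1 + r0 - 2 * u + (\<i> * hc / 2) * asq u * (r1 - r0) = 0)"

definition mtm_solution ::
  "real \<Rightarrow> (int \<Rightarrow> real \<Rightarrow> complex) \<Rightarrow> (int \<Rightarrow> real \<Rightarrow> complex) \<Rightarrow> (int \<Rightarrow> real \<Rightarrow> complex) \<Rightarrow> bool" where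
  "mtm_solution h U R Q \<longleftrightarrow>
     (\<forall>n t. U n differentiable (at t) \<and> R n differentiable (at t) \<and> Q n differentiable (at t)
        \<and> mtm_eqs h U R Q n t (vector_derivative (U n) (at t)))"

definition mtm_S :: "real \<Rightarrow> complex \<Rightarrow> complex" where
  "mtm_S h u = (1 + \<i> / 2 * complex_of_real h * asq u) / (1 - \<i> / 2 * complex_of_real h * asq u)"

definition N11 :: "real \<Rightarrow> complex \<Rightarrow> complex \<Rightarrow> complex" where
  "N11 h u l = l + 2 * \<i> / (complex_of_real h * l) * mtm_S h u"
definition N12 :: "real \<Rightarrow> complex \<Rightarrow> complex \<Rightarrow> complex" where
  "N12 h u l = 2 * u / (1 - \<i> / 2 * complex_of_real h * asq u)"
definition N21 :: "real \<Rightarrow> complex \<Rightarrow> complex \<Rightarrow> complex" where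
  "N21 h u l = 2 * cnj u / (1 - \<i> / 2 * complex_of_real h * asq u)"
definition N22 :: "real \<Rightarrow> complex \<Rightarrow> complex \<Rightarrow> complex" where
  "N22 h u l = 2 * \<i> / (complex_of_real h * l) - l * mtm_S h u"

definition P11 :: "complex \<Rightarrow> complex \<Rightarrow> complex \<Rightarrow> complex" where
  "P11 r q l = \<i> / 2 * (l^2 - asq r)"
definition P12 :: "complex \<Rightarrow> complex \<Rightarrow> complex \<Rightarrow> complex" where
  "P12 r q l = \<i> / 2 * (l * r - q / l)"
definition P21 :: "complex \<Rightarrow> complex \<Rightarrow> complex \<Rightarrow> complex" where
  "P21 r q l = \<i> / 2 * (l * cnj r - cnj q / l)"
definition P22 :: "complex \<Rightarrow> complex \<Rightarrow> complex \<Rightarrow> complex" where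
  "P22 r q l = \<i> / 2 * (asq q - 1 / l^2)"

definition lax_solution ::
  "real \<Rightarrow> (int \<Rightarrow> real \<Rightarrow> complex) \<Rightarrow> (int \<Rightarrow> real \<Rightarrow> complex) \<Rightarrow> (int \<Rightarrow> real \<Rightarrow> complex)
    \<Rightarrow> complex \<Rightarrow> (int \<Rightarrow> real \<Rightarrow> complex) \<Rightarrow> (int \<Rightarrow> real \<Rightarrow> complex) \<Rightarrow> bool" where
  "lax_solution h U R Q l f g \<longleftrightarrow>
     (\<forall>n t.
        f (n+1) t = N11 h (U n t) l * f n t + N12 h (U n t) l * g n t
      \<and> g (n+1) t = N21 h (U n t) l * f n t + N22 h (U n t) l * g n t
      \<and> (f n has_vector_derivative (P11 (R n t) (Q n t) l * f n t + P12 (R n t) (Q n t) l * g n t)) (at t)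
      \<and> (g n has_vector_derivative (P21 (R n t) (Q n t) l * f n t + P22 (R n t) (Q n t) l * g n t)) (at t))"

definition U1_num :: "real \<Rightarrow> complex \<Rightarrow> complex \<Rightarrow> complex \<Rightarrow> complex \<Rightarrow> complex" where
  "U1_num h l u f g = - (2 * \<i> * (cnj l * asq f + l * asq g) * u
      - complex_of_real h * asq l * (l * asq f + cnj l * asq g) * u
      + 2 * \<i> * (l^2 - (cnj l)^2) * f * cnj g)"
definition U1_den :: "real \<Rightarrow> complex \<Rightarrow> complex \<Rightarrow> complex \<Rightarrow> complex \<Rightarrow> complex" where
  "U1_den h l u f g = 2 * \<i> * (l * asq f + cnj l * asq g)
      - complex_of_real h * asq l * (cnj l * asq f + l * asq g)
      + complex_of_real h * (l^2 - (cnj l)^2) * cnj f * g * u"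
definition R1_num :: "complex \<Rightarrow> complex \<Rightarrow> complex \<Rightarrow> complex \<Rightarrow> complex" where
  "R1_num l r f g = - ((cnj l * asq f + l * asq g) * r + (l^2 - (cnj l)^2) * f * cnj g)"
definition R1_den :: "complex \<Rightarrow> complex \<Rightarrow> complex \<Rightarrow> complex" where
  "R1_den l f g = l * asq f + cnj l * asq g"
definition Q1_num :: "complex \<Rightarrow> complex \<Rightarrow> complex \<Rightarrow> complex \<Rightarrow> complex" where
  "Q1_num l q f g = - (asq l * (l * asq f + cnj l * asq g) * q + (l^2 - (cnj l)^2) * f * cnj g)"
definition Q1_den :: "complex \<Rightarrow> complex \<Rightarrow> complex \<Rightarrow> complex" where
  "Q1_den l f g = asq l * (cnj l * asq f + l * asq g)"

end

theory Submission
  imports Defs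
begin

text \<open>
  Treat the conjugates of all fields as independent variables and \<open>\<i>\<close> as a root j of
  j^2 = -1. Then R_{n+1}, Q_{n+1} (solved from the second and third MTM equations), f_{n+1},
  g_{n+1} (from N_n), dU_n/dt (from the first equation) and df_n/dt, dg_n/dt (from P_n) are
  rational functions of the data at site n. The Darboux formulas are invariant under rescaling
  (f, g), so at site n+1 they may be evaluated on the polynomial numerators F, G of f_{n+1},
  g_{n+1}. Each transformed equation then reduces to a polynomial identity modulo j^2 = -1.
  The basic one says that the R-denominator at site n times the conjugate R-denominator at
  site n+1 is, up to a nonzero factor, 2 |U_den|^2 - j h |U_num|^2; it turns the factors
  1 -/+ j h |U^[1]|^2 / 2 of the transformed equations into quotients of denominators.
\<close>

definition mtm_lhs1 :: "'a::field \<Rightarrow> 'a \<Rightarrow> 'a \<Rightarrow> 'a \<Rightarrow> 'a \<Rightarrow> 'a \<Rightarrow> 'a \<Rightarrow> 'a \<Rightarrow> 'a \<Rightarrow> 'a \<Rightarrow> 'a \<Rightarrow> 'a \<Rightarrow> 'a" where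
  "mtm_lhs1 j h u r0 rb0 r1 rb1 q0 qb0 q1 qb1 D =
     4 * j * D + q1 + q0 + (2 * j / h) * (r1 - r0) + u^2 * (rb0 + rb1)
       - u * (q1 * qb1 + q0 * qb0 + r1 * rb1 + r0 * rb0) - (j * h / 2) * u^2 * (qb1 - qb0)"

definition mtm_lhs2 :: "'a::field \<Rightarrow> 'a \<Rightarrow> 'a \<Rightarrow> 'a \<Rightarrow> 'a \<Rightarrow> 'a \<Rightarrow> 'a" where
  "mtm_lhs2 j h u ub q0 q1 = - (2 * j / h) * (q1 - q0) + 2 * u - u * ub * (q1 + q0)"

definition mtm_lhs3 :: "'a::field \<Rightarrow> 'a \<Rightarrow> 'a \<Rightarrow> 'a \<Rightarrow> 'a \<Rightarrow> 'a \<Rightarrow> 'a" where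
  "mtm_lhs3 j h u ub r0 r1 = r1 + r0 - 2 * u + (j * h / 2) * (u * ub) * (r1 - r0)"

text \<open>
  The barred parameters stand for complex conjugates but are independent variables, so the
  identities below are polynomial and hold in every field of characteristic 0 in which
  j^2 = -1. The conjugate of a quantity is its instance under j \<mapsto> -j, x \<leftrightarrow> x_bar.
\<close>
locale mtm_site =
  fixes j h l lb u ub r rb q qb f fb g gb :: "'a::field_char_0"
begin

definition S where "S = 2 - j*h*u*ub"
abbreviation "S_bar \<equiv> mtm_site.S (-j) h ub u"

definition r_next where "r_next = (4*u - S*r) / S_bar"
definition q_next where "q_next = (S_bar*q - 2*j*h*u) / S"
text \<open>f_{n+1} = F / (h l S) and g_{n+1} = G / (h l S), see N_step.\<close>
definition F where "F = (h*l^2*S + 2*j*S_bar)*f + 4*h*l*u*g"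
definition G where "G = 4*h*l*ub*f + (2*j*S - h*l^2*S_bar)*g"
abbreviation "F_bar \<equiv> mtm_site.F (-j) h lb ub u fb gb"
abbreviation "G_bar \<equiv> mtm_site.G (-j) h lb ub u fb gb"

definition U_num where
  "U_num = - (2*j*(lb*f*fb + l*g*gb)*u - h*l*lb*(l*f*fb + lb*g*gb)*u + 2*j*(l^2 - lb^2)*f*gb)"
definition U_den where
  "U_den = 2*j*(l*f*fb + lb*g*gb) - h*l*lb*(lb*f*fb + l*g*gb) + h*(l^2 - lb^2)*fb*g*u"
definition R_num where "R_num = - ((lb*f*fb + l*g*gb)*r + (l^2 - lb^2)*f*gb)"
definition R_den where "R_den = l*f*fb + lb*g*gb"
definition Q_num where "Q_num = - (l*lb*(l*f*fb + lb*g*gb)*q + (l^2 - lb^2)*f*gb)"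
abbreviation "U_num_bar \<equiv> mtm_site.U_num (-j) h lb l ub fb f gb g"
abbreviation "U_den_bar \<equiv> mtm_site.U_den (-j) h lb l ub fb f gb g"
abbreviation "R_num_bar \<equiv> mtm_site.R_num lb l rb fb f gb g"
abbreviation "R_den_bar \<equiv> mtm_site.R_den lb l fb f gb g"
abbreviation "Q_num_bar \<equiv> mtm_site.Q_num lb l qb fb f gb g"

abbreviation "R_den_next \<equiv> mtm_site.R_den l lb F F_bar G G_bar"
abbreviation "R_den_next_bar \<equiv> mtm_site.R_den lb l F_bar F G_bar G"
text \<open>
  S_bar R_num and S Q_num at site n+1, evaluated at (r_next, F, G) and (q_next, F, G);
  scaling f, g by the factor 1/(h l S) does not change the Darboux quotients.
\<close>
definition R_num_next where
  "R_num_next = - (R_den_next_bar*(4*u - S*r) + S_bar*(l^2 - lb^2)*F*G_bar)"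
definition Q_num_next where
  "Q_num_next = - (l*lb*R_den_next*(S_bar*q - 2*j*h*u) + S*(l^2 - lb^2)*F*G_bar)"

text \<open>The first MTM equation reads 4 h dU/dt = j T once R_{n+1}, Q_{n+1} are eliminated.\<close>
definition T where
  "T = 2*h*u^2*rb + j*h^2*u^2*qb - 2*h*u*r*rb - 2*h*u*q*qb - j*h^2*u + 4*j*(u - r) + 2*h*q"
text \<open>2 l df/dt and 2 l^2 dg/dt, by the time part of the Lax pair.\<close>
definition Fdot where "Fdot = j*((l^3 - l*r*rb)*f + (l^2*r - q)*g)"
definition Gdot where "Gdot = j*((l^3*rb - l*qb)*f + (l^2*q*qb - 1)*g)"
abbreviation "Fdot_bar \<equiv> mtm_site.Fdot (-j) lb rb r qb fb gb"
abbreviation "Gdot_bar \<equiv> mtm_site.Gdot (-j) lb r qb q fb gb"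

definition U_num_deriv where
  "U_num_deriv du df dfb dg dgb =
       (h*l^2*lb*f*fb + h*l*lb^2*g*gb - 2*j*(lb*f*fb + l*g*gb))*du
     + ((h*l^2*lb - 2*j*lb)*u*fb - 2*j*(l^2 - lb^2)*gb)*df
     + (h*l^2*lb - 2*j*lb)*u*f*dfb
     + (h*l*lb^2 - 2*j*l)*u*gb*dg
     + ((h*l*lb^2 - 2*j*l)*u*g - 2*j*(l^2 - lb^2)*f)*dgb"
definition U_den_deriv where
  "U_den_deriv du df dfb dg dgb =
       h*(l^2 - lb^2)*fb*g*du
     + (2*j*l - h*l*lb^2)*fb*df
     + ((2*j*l - h*l*lb^2)*f + h*(l^2 - lb^2)*g*u)*dfb
     + ((2*j*lb - h*l^2*lb)*gb + h*(l^2 - lb^2)*fb*u)*dg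
     + (2*j*lb - h*l^2*lb)*g*dgb"

lemmas mtm_site_defs = mtm_site.S_def mtm_site.F_def mtm_site.G_def
  mtm_site.U_num_def mtm_site.U_den_def mtm_site.R_num_def mtm_site.R_den_def mtm_site.Q_num_def
  mtm_site.R_num_next_def mtm_site.Q_num_next_def mtm_site.T_def mtm_site.Fdot_def mtm_site.Gdot_def
  mtm_site.U_num_deriv_def mtm_site.U_den_deriv_def

lemma R_den_mult_R_den_next_bar:
  assumes "j*j = -1"
  shows "R_den * R_den_next_bar = S_bar * (2*U_den*U_den_bar - j*h*U_num*U_num_bar)"
  using assms unfolding mtm_site_defs by algebra

lemma R_den_bar_mult_R_den_next:
  assumes "j*j = -1"
  shows "R_den_bar * R_den_next = S * (2*U_den*U_den_bar + j*h*U_num*U_num_bar)"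
  using mtm_site.R_den_mult_R_den_next_bar[where j="-j" and l=lb and lb=l and u=ub and ub=u
      and f=fb and fb=f and g=gb and gb=g and h=h] assms
  by (simp add: mult.commute)

lemma darboux_eq3_identity:
  assumes "j*j = -1"
  shows "R_num_next * R_den_bar + S * R_num * R_den_next_bar = 4 * S * S_bar * U_num * U_den_bar"
  using assms unfolding mtm_site_defs by algebra

lemma darboux_eq2_identity:
  assumes "j*j = -1"
  shows "j * (S_bar*Q_num*R_den_next - Q_num_next*R_den) + 2*h*l*lb*S*S_bar*U_num*U_den_bar = 0"
  using assms unfolding mtm_site_defs by algebra

text \<open>
  The derivative slots are 16 h l^2 lb^2 times (dU/dt, df/dt, ...), and the bracket is
  l^2 lb^2 U_den^2 R_den R_den_bar times T at the transformed site.
\<close>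
lemma darboux_eq1_identity:
  assumes "j*j = -1"
  shows "j * (U_num_deriv (4*l^2*lb^2*(j*T)) (8*h*l*lb^2*Fdot) (8*h*l^2*lb*Fdot_bar)
                (8*h*lb^2*Gdot) (8*h*l^2*Gdot_bar) * U_den
            - U_num * U_den_deriv (4*l^2*lb^2*(j*T)) (8*h*l*lb^2*Fdot) (8*h*l^2*lb*Fdot_bar)
                (8*h*lb^2*Gdot) (8*h*l^2*Gdot_bar))
         * R_den * R_den_bar
       + 4 * (2*h*l^2*lb^2*U_num^2*R_num_bar*R_den + j*h^2*l*lb*U_num^2*Q_num_bar*R_den_bar
         - 2*h*l^2*lb^2*U_num*U_den*R_num*R_num_bar - 2*h*U_num*U_den*Q_num*Q_num_bar
         - j*h^2*l^2*lb^2*U_num*U_den*R_den*R_den_bar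
         + 4*j*l^2*lb^2*(U_num*R_den - R_num*U_den)*U_den*R_den_bar
         + 2*h*l*lb*Q_num*U_den^2*R_den) = 0"
  using assms unfolding mtm_site_defs by algebra

lemma r_next_unique:
  assumes "mtm_lhs3 j h u ub r r1 = 0" and "S_bar \<noteq> 0"
  shows "r1 = r_next"
proof -
  have "S_bar * r1 + S * r - 4*u = 2 * mtm_lhs3 j h u ub r r1"
    by (simp add: mtm_lhs3_def mtm_site.S_def field_simps)
  with assms show ?thesis
    by (simp add: r_next_def field_simps)
qed

lemma q_next_unique:
  assumes "j*j = -1" and "h \<noteq> 0" and "mtm_lhs2 j h u ub q q1 = 0" and "S \<noteq> 0"
  shows "q1 = q_next"
proof -
  have "S * q1 - (S_bar * q - 2*j*h*u) = j * h * mtm_lhs2 j h u ub q q1"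
    using assms(1,2) unfolding mtm_lhs2_def mtm_site.S_def by (simp add: field_simps; algebra)
  with assms(3,4) show ?thesis
    by (simp add: q_next_def field_simps)
qed

lemma mtm_lhs1_reduced:
  assumes j: "j*j = -1" and h: "h \<noteq> 0" and S: "S \<noteq> 0" "S_bar \<noteq> 0"
    and eq3: "mtm_lhs3 j h u ub r r1 = 0" "mtm_lhs3 (-j) h ub u rb rb1 = 0"
    and eq2: "mtm_lhs2 j h u ub q q1 = 0" "mtm_lhs2 (-j) h ub u qb qb1 = 0"
  shows "mtm_lhs1 j h u r rb r1 rb1 q qb q1 qb1 D = 4*j*D + T/h"
proof -
  have jb: "(-j)*(-j) = -1" using j by simp
  have r1: "r1 = r_next" by (rule r_next_unique[OF eq3(1) S(2)])
  have rb1: "rb1 = mtm_site.r_next (-j) h ub u rb"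
    using mtm_site.r_next_unique[of "-j" h ub u rb rb1] eq3(2) S(1) by simp
  have q1: "q1 = q_next" by (rule q_next_unique[OF j h eq2(1) S(1)])
  have qb1: "qb1 = mtm_site.q_next (-j) h ub u qb"
    using mtm_site.q_next_unique[OF jb h eq2(2)] S(2) by simp
  show ?thesis
    unfolding r1 rb1 q1 qb1 mtm_site.r_next_def mtm_site.q_next_def mtm_lhs1_def T_def
    using S h by (simp add: field_simps) (use j in \<open>unfold mtm_site.S_def, algebra\<close>)
qed

lemma N_step:
  assumes "h \<noteq> 0" "l \<noteq> 0" "S \<noteq> 0"
  shows "(l + 2*j/(h*l) * ((1 + j/2*h*(u*ub)) / (1 - j/2*h*(u*ub)))) * f + 2*u/(1 - j/2*h*(u*ub)) * g
           = F/(h*l*S)"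
    and "2*ub/(1 - j/2*h*(u*ub)) * f + (2*j/(h*l) - l*((1 + j/2*h*(u*ub)) / (1 - j/2*h*(u*ub)))) * g
           = G/(h*l*S)"
proof -
  have minus: "1 - j/2*h*(u*ub) = S/2" and plus: "1 + j/2*h*(u*ub) = S_bar/2"
    by (simp_all add: mtm_site.S_def field_simps)
  show "(l + 2*j/(h*l) * ((1 + j/2*h*(u*ub)) / (1 - j/2*h*(u*ub)))) * f + 2*u/(1 - j/2*h*(u*ub)) * g
          = F/(h*l*S)"
    unfolding minus plus F_def using assms by (simp add: field_simps power2_eq_square)
  show "2*ub/(1 - j/2*h*(u*ub)) * f + (2*j/(h*l) - l*((1 + j/2*h*(u*ub)) / (1 - j/2*h*(u*ub)))) * g
          = G/(h*l*S)"
    unfolding minus plus G_def using assms by (simp add: field_simps power2_eq_square)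
qed

lemma P_step:
  assumes "l \<noteq> 0"
  shows "2*l*(j/2*(l^2 - r*rb)*f + j/2*(l*r - q/l)*g) = Fdot"
    and "2*l^2*(j/2*(l*rb - qb/l)*f + j/2*(q*qb - 1/l^2)*g) = Gdot"
  using assms by (simp_all add: Fdot_def Gdot_def field_simps power2_eq_square power3_eq_cube)

lemma darboux_at_next_site:
  assumes "h \<noteq> 0" "l \<noteq> 0" "lb \<noteq> 0" "S \<noteq> 0" "S_bar \<noteq> 0"
  defines "c \<equiv> h^2*l*lb*S*S_bar"
  shows "mtm_site.R_den l lb (F/(h*l*S)) (F_bar/(h*lb*S_bar)) (G/(h*l*S)) (G_bar/(h*lb*S_bar))
           = R_den_next / c"
    and "mtm_site.R_den lb l (F_bar/(h*lb*S_bar)) (F/(h*l*S)) (G_bar/(h*lb*S_bar)) (G/(h*l*S))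
           = R_den_next_bar / c"
    and "mtm_site.R_num l lb r_next (F/(h*l*S)) (F_bar/(h*lb*S_bar)) (G/(h*l*S)) (G_bar/(h*lb*S_bar))
           = R_num_next / (S_bar*c)"
    and "mtm_site.Q_num l lb q_next (F/(h*l*S)) (F_bar/(h*lb*S_bar)) (G/(h*l*S)) (G_bar/(h*lb*S_bar))
           = Q_num_next / (S*c)"
  using assms
  by (simp_all add: mtm_site.R_den_def mtm_site.R_num_def mtm_site.Q_num_def R_num_next_def Q_num_next_def
      r_next_def q_next_def field_simps power2_eq_square)

lemma darboux_eq3:
  assumes j: "j*j = -1"
    and nonzero: "S \<noteq> 0" "S_bar \<noteq> 0" "U_den \<noteq> 0" "U_den_bar \<noteq> 0"
      "R_den \<noteq> 0" "R_den_next \<noteq> 0"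
  shows "mtm_lhs3 j h (U_num/U_den) (U_num_bar/U_den_bar) (R_num/R_den) (R_num_next/(S_bar*R_den_next)) = 0"
proof -
  have minus: "1 - j*h/2 * (U_num/U_den) * (U_num_bar/U_den_bar)
      = R_den*R_den_next_bar / (2*S_bar*U_den*U_den_bar)"
    using R_den_mult_R_den_next_bar[OF j] nonzero by (simp add: field_simps) algebra
  have plus: "1 + j*h/2 * (U_num/U_den) * (U_num_bar/U_den_bar)
      = R_den_bar*R_den_next / (2*S*U_den*U_den_bar)"
    using R_den_bar_mult_R_den_next[OF j] nonzero by (simp add: field_simps)
  have "mtm_lhs3 j h (U_num/U_den) (U_num_bar/U_den_bar) (R_num/R_den) (R_num_next/(S_bar*R_den_next))
      = R_num_next/(S_bar*R_den_next) * (1 + j*h/2 * (U_num/U_den) * (U_num_bar/U_den_bar))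
        + R_num/R_den * (1 - j*h/2 * (U_num/U_den) * (U_num_bar/U_den_bar)) - 2*(U_num/U_den)"
    using nonzero by (simp add: mtm_lhs3_def field_simps)
  also have "\<dots> = (R_num_next*R_den_bar + S*R_num*R_den_next_bar - 4*S*S_bar*U_num*U_den_bar)
                   / (2*S*S_bar*U_den*U_den_bar)"
    unfolding plus minus using nonzero by (simp add: field_simps)
  also have "\<dots> = 0"
    using darboux_eq3_identity[OF j] by simp
  finally show ?thesis .
qed

lemma darboux_eq2:
  assumes j: "j*j = -1" and h: "h \<noteq> 0" and l: "l \<noteq> 0" "lb \<noteq> 0"
    and nonzero: "S \<noteq> 0" "S_bar \<noteq> 0" "U_den \<noteq> 0" "U_den_bar \<noteq> 0"
      "R_den_bar \<noteq> 0" "R_den_next_bar \<noteq> 0"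
  shows "mtm_lhs2 j h (U_num/U_den) (U_num_bar/U_den_bar) (Q_num/(l*lb*R_den_bar))
           (Q_num_next/(S*l*lb*R_den_next_bar)) = 0"
proof -
  have plus: "2*j/h + (U_num/U_den) * (U_num_bar/U_den_bar)
      = j*R_den*R_den_next_bar / (h*S_bar*U_den*U_den_bar)"
    using R_den_mult_R_den_next_bar[OF j] j h nonzero by (simp add: field_simps) algebra
  have minus: "2*j/h - (U_num/U_den) * (U_num_bar/U_den_bar)
      = j*R_den_bar*R_den_next / (h*S*U_den*U_den_bar)"
    using R_den_bar_mult_R_den_next[OF j] j h nonzero by (simp add: field_simps) algebra
  have "mtm_lhs2 j h (U_num/U_den) (U_num_bar/U_den_bar) (Q_num/(l*lb*R_den_bar))
          (Q_num_next/(S*l*lb*R_den_next_bar))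
      = - Q_num_next/(S*l*lb*R_den_next_bar) * (2*j/h + (U_num/U_den) * (U_num_bar/U_den_bar))
        + Q_num/(l*lb*R_den_bar) * (2*j/h - (U_num/U_den) * (U_num_bar/U_den_bar)) + 2*(U_num/U_den)"
    using h l nonzero by (simp add: mtm_lhs2_def field_simps)
  also have "\<dots> = (j*(S_bar*Q_num*R_den_next - Q_num_next*R_den) + 2*h*l*lb*S*S_bar*U_num*U_den_bar)
                   / (h*l*lb*S*S_bar*U_den*U_den_bar)"
    unfolding plus minus using h l nonzero by (simp add: field_simps)
  also have "\<dots> = 0"
    using darboux_eq2_identity[OF j] by simp
  finally show ?thesis .
qed

lemma darboux_eq1:
  assumes j: "j*j = -1" and h: "h \<noteq> 0" and l: "l \<noteq> 0" "lb \<noteq> 0"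
    and nonzero: "U_den \<noteq> 0" "R_den \<noteq> 0" "R_den_bar \<noteq> 0"
    and D: "4*h*D = j*T"
    and df: "2*l*df = Fdot" "2*lb*dfb = Fdot_bar"
    and dg: "2*l^2*dg = Gdot" "2*lb^2*dgb = Gdot_bar"
  shows "4*j*((U_num_deriv D df dfb dg dgb * U_den - U_num * U_den_deriv D df dfb dg dgb) / U_den^2)
           + mtm_site.T j h (U_num/U_den) (R_num/R_den) (R_num_bar/R_den_bar)
               (Q_num/(l*lb*R_den_bar)) (Q_num_bar/(l*lb*R_den)) / h = 0"
proof -
  define du' df' dfb' dg' dgb' where "du' = 4*l^2*lb^2*(j*T)" and "df' = 8*h*l*lb^2*Fdot"
    and "dfb' = 8*h*l^2*lb*Fdot_bar" and "dg' = 8*h*lb^2*Gdot" and "dgb' = 8*h*l^2*Gdot_bar"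
  have num: "16*h*l^2*lb^2 * U_num_deriv D df dfb dg dgb = U_num_deriv du' df' dfb' dg' dgb'"
    unfolding du'_def df'_def dfb'_def dg'_def dgb'_def D[symmetric] df[symmetric] dg[symmetric]
      U_num_deriv_def
    by algebra
  have den: "16*h*l^2*lb^2 * U_den_deriv D df dfb dg dgb = U_den_deriv du' df' dfb' dg' dgb'"
    unfolding du'_def df'_def dfb'_def dg'_def dgb'_def D[symmetric] df[symmetric] dg[symmetric]
      U_den_deriv_def
    by algebra
  have "4*h*l^2*lb^2*U_den^2*R_den*R_den_bar
        * (4*j*((U_num_deriv D df dfb dg dgb * U_den - U_num * U_den_deriv D df dfb dg dgb) / U_den^2)
           + mtm_site.T j h (U_num/U_den) (R_num/R_den) (R_num_bar/R_den_bar)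
               (Q_num/(l*lb*R_den_bar)) (Q_num_bar/(l*lb*R_den)) / h)
      = j * ((16*h*l^2*lb^2 * U_num_deriv D df dfb dg dgb) * U_den
             - U_num * (16*h*l^2*lb^2 * U_den_deriv D df dfb dg dgb)) * R_den * R_den_bar
        + 4 * (2*h*l^2*lb^2*U_num^2*R_num_bar*R_den + j*h^2*l*lb*U_num^2*Q_num_bar*R_den_bar
          - 2*h*l^2*lb^2*U_num*U_den*R_num*R_num_bar - 2*h*U_num*U_den*Q_num*Q_num_bar
          - j*h^2*l^2*lb^2*U_num*U_den*R_den*R_den_bar
          + 4*j*l^2*lb^2*(U_num*R_den - R_num*U_den)*U_den*R_den_bar
          + 2*h*l*lb*Q_num*U_den^2*R_den)"
    unfolding mtm_site.T_def using h l nonzero by (simp add: field_simps power2_eq_square)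
  also have "\<dots> = 0"
    unfolding num den du'_def df'_def dfb'_def dg'_def dgb'_def by (rule darboux_eq1_identity[OF j])
  finally show ?thesis
    using h l nonzero by simp
qed

end

lemma asq_eq: "asq z = z * cnj z"
  unfolding asq_def by (rule complex_norm_square)

lemma darboux_quantities_eq:
  "U1_num h l u f g = mtm_site.U_num \<i> (complex_of_real h) l (cnj l) u f (cnj f) g (cnj g)"
  "U1_den h l u f g = mtm_site.U_den \<i> (complex_of_real h) l (cnj l) u f (cnj f) g (cnj g)"
  "R1_num l r f g = mtm_site.R_num l (cnj l) r f (cnj f) g (cnj g)"
  "R1_den l f g = mtm_site.R_den l (cnj l) f (cnj f) g (cnj g)"
  "Q1_num l q f g = mtm_site.Q_num l (cnj l) q f (cnj f) g (cnj g)"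
  "Q1_den l f g = l * cnj l * mtm_site.R_den (cnj l) l (cnj f) f (cnj g) g"
  unfolding U1_num_def U1_den_def R1_num_def R1_den_def Q1_num_def Q1_den_def asq_eq
    mtm_site.U_num_def mtm_site.U_den_def mtm_site.R_num_def mtm_site.R_den_def mtm_site.Q_num_def
  by (simp_all add: algebra_simps power2_eq_square)

lemma cnj_mtm_site:
  "cnj (mtm_site.S j h u ub) = mtm_site.S (cnj j) (cnj h) (cnj u) (cnj ub)"
  "cnj (mtm_site.F j h l u ub f g)
     = mtm_site.F (cnj j) (cnj h) (cnj l) (cnj u) (cnj ub) (cnj f) (cnj g)"
  "cnj (mtm_site.G j h l u ub f g)
     = mtm_site.G (cnj j) (cnj h) (cnj l) (cnj u) (cnj ub) (cnj f) (cnj g)"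
  "cnj (mtm_site.U_num j h l lb u f fb g gb)
     = mtm_site.U_num (cnj j) (cnj h) (cnj l) (cnj lb) (cnj u) (cnj f) (cnj fb) (cnj g) (cnj gb)"
  "cnj (mtm_site.U_den j h l lb u f fb g gb)
     = mtm_site.U_den (cnj j) (cnj h) (cnj l) (cnj lb) (cnj u) (cnj f) (cnj fb) (cnj g) (cnj gb)"
  "cnj (mtm_site.R_num l lb r f fb g gb)
     = mtm_site.R_num (cnj l) (cnj lb) (cnj r) (cnj f) (cnj fb) (cnj g) (cnj gb)"
  "cnj (mtm_site.R_den l lb f fb g gb)
     = mtm_site.R_den (cnj l) (cnj lb) (cnj f) (cnj fb) (cnj g) (cnj gb)"
  "cnj (mtm_site.Q_num l lb q f fb g gb)
     = mtm_site.Q_num (cnj l) (cnj lb) (cnj q) (cnj f) (cnj fb) (cnj g) (cnj gb)"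
  "cnj (mtm_site.Fdot j l r rb q f g)
     = mtm_site.Fdot (cnj j) (cnj l) (cnj r) (cnj rb) (cnj q) (cnj f) (cnj g)"
  "cnj (mtm_site.Gdot j l rb q qb f g)
     = mtm_site.Gdot (cnj j) (cnj l) (cnj rb) (cnj q) (cnj qb) (cnj f) (cnj g)"
  by (simp_all add: mtm_site.mtm_site_defs)

lemma mtm_lhs2_conj:
  assumes "mtm_lhs2 \<i> (complex_of_real h) u (cnj u) q0 q1 = 0"
  shows "mtm_lhs2 (-\<i>) (complex_of_real h) (cnj u) u (cnj q0) (cnj q1) = 0"
proof -
  have "cnj (mtm_lhs2 \<i> (complex_of_real h) u (cnj u) q0 q1)
      = mtm_lhs2 (-\<i>) (complex_of_real h) (cnj u) u (cnj q0) (cnj q1)"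
    by (simp add: mtm_lhs2_def mult.commute)
  with assms show ?thesis by simp
qed

lemma mtm_lhs3_conj:
  assumes "mtm_lhs3 \<i> (complex_of_real h) u (cnj u) r0 r1 = 0"
  shows "mtm_lhs3 (-\<i>) (complex_of_real h) (cnj u) u (cnj r0) (cnj r1) = 0"
proof -
  have "cnj (mtm_lhs3 \<i> (complex_of_real h) u (cnj u) r0 r1)
      = mtm_lhs3 (-\<i>) (complex_of_real h) (cnj u) u (cnj r0) (cnj r1)"
    by (simp add: mtm_lhs3_def mult.commute)
  with assms show ?thesis by simp
qed

lemma mtm_S_nonzero:
  "mtm_site.S \<i> (complex_of_real h) z (cnj z) \<noteq> 0"
  "mtm_site.S (-\<i>) (complex_of_real h) (cnj z) z \<noteq> 0"
proof -
  have "z * cnj z = complex_of_real ((cmod z)^2)"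
    by (rule complex_norm_square[symmetric])
  then have "\<i> * complex_of_real h * z * cnj z = \<i> * complex_of_real (h * (cmod z)^2)"
    by (simp add: mult.assoc)
  then have "Re (mtm_site.S \<i> (complex_of_real h) z (cnj z)) = 2"
    and "Re (mtm_site.S (-\<i>) (complex_of_real h) (cnj z) z) = 2"
    by (simp_all add: mtm_site.S_def mult.commute[of "cnj z"])
  then show "mtm_site.S \<i> (complex_of_real h) z (cnj z) \<noteq> 0"
    and "mtm_site.S (-\<i>) (complex_of_real h) (cnj z) z \<noteq> 0"
    by auto
qed

lemma mtm_eqs_iff:
  "mtm_eqs h U R Q n t D \<longleftrightarrow>
     mtm_lhs1 \<i> (complex_of_real h) (U n t) (R n t) (cnj (R n t)) (R (n+1) t) (cnj (R (n+1) t))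
       (Q n t) (cnj (Q n t)) (Q (n+1) t) (cnj (Q (n+1) t)) D = 0
   \<and> mtm_lhs2 \<i> (complex_of_real h) (U n t) (cnj (U n t)) (Q n t) (Q (n+1) t) = 0
   \<and> mtm_lhs3 \<i> (complex_of_real h) (U n t) (cnj (U n t)) (R n t) (R (n+1) t) = 0"
  unfolding mtm_eqs_def mtm_lhs1_def mtm_lhs2_def mtm_lhs3_def Let_def asq_eq ..

locale mtm_complex_site =
  fixes h :: real and l u r q f g :: complex
  assumes h_pos: "h > 0" and l_nonzero: "l \<noteq> 0"

sublocale mtm_complex_site \<subseteq>
  site: mtm_site \<i> "complex_of_real h" l "cnj l" u "cnj u" r "cnj r" q "cnj q" f "cnj f" g "cnj g" .

context mtm_complex_site
begin

lemma site_nonzero: "complex_of_real h \<noteq> 0" "cnj l \<noteq> 0" "site.S \<noteq> 0" "site.S_bar \<noteq> 0"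
  using h_pos l_nonzero mtm_S_nonzero by auto

lemma transformed_site_values:
  assumes "U1_den h l u f g \<noteq> 0" "R1_den l f g \<noteq> 0" "Q1_den l f g \<noteq> 0"
  shows "site.U_den \<noteq> 0" "site.U_den_bar \<noteq> 0" "site.R_den \<noteq> 0" "site.R_den_bar \<noteq> 0"
    and "U1_num h l u f g / U1_den h l u f g = site.U_num / site.U_den"
    and "cnj (U1_num h l u f g / U1_den h l u f g) = site.U_num_bar / site.U_den_bar"
    and "R1_num l r f g / R1_den l f g = site.R_num / site.R_den"
    and "cnj (R1_num l r f g / R1_den l f g) = site.R_num_bar / site.R_den_bar"
    and "Q1_num l q f g / Q1_den l f g = site.Q_num / (l * cnj l * site.R_den_bar)"
    and "cnj (Q1_num l q f g / Q1_den l f g) = site.Q_num_bar / (l * cnj l * site.R_den)"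
proof -
  have "site.U_den_bar = cnj site.U_den" by (simp add: cnj_mtm_site)
  then show "site.U_den \<noteq> 0" "site.U_den_bar \<noteq> 0" "site.R_den \<noteq> 0" "site.R_den_bar \<noteq> 0"
    using assms by (auto simp: darboux_quantities_eq)
qed (simp_all add: darboux_quantities_eq cnj_mtm_site mult.commute)

lemma transformed_next_site_values:
  fixes r1 q1 f1 g1 :: complex
  assumes eq2: "mtm_lhs2 \<i> (complex_of_real h) u (cnj u) q q1 = 0"
    and eq3: "mtm_lhs3 \<i> (complex_of_real h) u (cnj u) r r1 = 0"
    and step: "f1 = N11 h u l * f + N12 h u l * g" "g1 = N21 h u l * f + N22 h u l * g"
    and nonzero: "R1_den l f1 g1 \<noteq> 0" "Q1_den l f1 g1 \<noteq> 0"
  shows "site.R_den_next \<noteq> 0" "site.R_den_next_bar \<noteq> 0"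
    and "R1_num l r1 f1 g1 / R1_den l f1 g1 = site.R_num_next / (site.S_bar * site.R_den_next)"
    and "Q1_num l q1 f1 g1 / Q1_den l f1 g1 = site.Q_num_next / (site.S * l * cnj l * site.R_den_next_bar)"
proof -
  note hc = site_nonzero(1) and lb = site_nonzero(2) and S = site_nonzero(3,4)
  let ?F = "site.F / (complex_of_real h * l * site.S)" and ?G = "site.G / (complex_of_real h * l * site.S)"
  let ?Fb = "site.F_bar / (complex_of_real h * cnj l * site.S_bar)"
    and ?Gb = "site.G_bar / (complex_of_real h * cnj l * site.S_bar)"
  have r1: "r1 = site.r_next" by (rule site.r_next_unique[OF eq3 S(2)])
  have q1: "q1 = site.q_next" by (rule site.q_next_unique[OF _ hc eq2 S(1)]) simp
  have f1: "f1 = ?F"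
    using step(1) site.N_step(1)[OF hc l_nonzero S(1)] by (simp add: N11_def N12_def mtm_S_def asq_eq)
  have g1: "g1 = ?G"
    using step(2) site.N_step(2)[OF hc l_nonzero S(1)] by (simp add: N21_def N22_def mtm_S_def asq_eq)
  have f1b: "cnj f1 = ?Fb" and g1b: "cnj g1 = ?Gb"
    using f1 g1 by (simp_all add: cnj_mtm_site)
  have at_next_site:
    "R1_num l r1 f1 g1 = mtm_site.R_num l (cnj l) site.r_next ?F ?Fb ?G ?Gb"
    "R1_den l f1 g1 = mtm_site.R_den l (cnj l) ?F ?Fb ?G ?Gb"
    "Q1_num l q1 f1 g1 = mtm_site.Q_num l (cnj l) site.q_next ?F ?Fb ?G ?Gb"
    "Q1_den l f1 g1 = l * cnj l * mtm_site.R_den (cnj l) l ?Fb ?F ?Gb ?G"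
    unfolding darboux_quantities_eq f1b g1b unfolding f1 g1 r1 q1 by simp_all
  note scaled = site.darboux_at_next_site[OF hc l_nonzero lb S]
  show den_next: "site.R_den_next \<noteq> 0" "site.R_den_next_bar \<noteq> 0"
    using nonzero unfolding at_next_site scaled by auto
  show "R1_num l r1 f1 g1 / R1_den l f1 g1 = site.R_num_next / (site.S_bar * site.R_den_next)"
    and "Q1_num l q1 f1 g1 / Q1_den l f1 g1 = site.Q_num_next / (site.S * l * cnj l * site.R_den_next_bar)"
    unfolding at_next_site scaled using hc l_nonzero lb S den_next by (simp_all add: field_simps)
qed

lemma time_derivatives:
  fixes r1 q1 D df dg :: complex
  assumes mtm: "mtm_lhs1 \<i> (complex_of_real h) u r (cnj r) r1 (cnj r1) q (cnj q) q1 (cnj q1) D = 0"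
      "mtm_lhs2 \<i> (complex_of_real h) u (cnj u) q q1 = 0" "mtm_lhs3 \<i> (complex_of_real h) u (cnj u) r r1 = 0"
    and deriv: "df = P11 r q l * f + P12 r q l * g" "dg = P21 r q l * f + P22 r q l * g"
  shows "4 * complex_of_real h * D = \<i> * site.T"
    and "2*l*df = site.Fdot" "2*cnj l*cnj df = site.Fdot_bar"
    and "2*l^2*dg = site.Gdot" "2*(cnj l)^2*cnj dg = site.Gdot_bar"
proof -
  have "4*\<i>*D + site.T / complex_of_real h = 0"
    using mtm site.mtm_lhs1_reduced[OF _ site_nonzero(1,3,4) mtm(3) mtm_lhs3_conj[OF mtm(3)]
        mtm(2) mtm_lhs2_conj[OF mtm(2)]]
    by simp
  then have "site.T = - 4*\<i>*complex_of_real h*D"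
    using site_nonzero(1) by (simp add: field_simps eq_neg_iff_add_eq_0)
  then show "4 * complex_of_real h * D = \<i> * site.T"
    by simp
  show df: "2*l*df = site.Fdot" and dg: "2*l^2*dg = site.Gdot"
    unfolding deriv P11_def P12_def P21_def P22_def asq_eq by (rule site.P_step[OF l_nonzero])+
  show "2*cnj l*cnj df = site.Fdot_bar" "2*(cnj l)^2*cnj dg = site.Gdot_bar"
    using arg_cong[OF df, of cnj] arg_cong[OF dg, of cnj] by (simp_all add: cnj_mtm_site)
qed

lemma darboux_site:
  fixes r1 q1 f1 g1 D df dg :: complex
  assumes mtm: "mtm_lhs1 \<i> (complex_of_real h) u r (cnj r) r1 (cnj r1) q (cnj q) q1 (cnj q1) D = 0
      \<and> mtm_lhs2 \<i> (complex_of_real h) u (cnj u) q q1 = 0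
      \<and> mtm_lhs3 \<i> (complex_of_real h) u (cnj u) r r1 = 0"
    and step: "f1 = N11 h u l * f + N12 h u l * g" "g1 = N21 h u l * f + N22 h u l * g"
    and deriv: "df = P11 r q l * f + P12 r q l * g" "dg = P21 r q l * f + P22 r q l * g"
    and nonzero: "U1_den h l u f g \<noteq> 0" "R1_den l f g \<noteq> 0" "R1_den l f1 g1 \<noteq> 0"
      "Q1_den l f g \<noteq> 0" "Q1_den l f1 g1 \<noteq> 0"
  defines "u' \<equiv> U1_num h l u f g / U1_den h l u f g"
    and "r' \<equiv> R1_num l r f g / R1_den l f g" and "r1' \<equiv> R1_num l r1 f1 g1 / R1_den l f1 g1"
    and "q' \<equiv> Q1_num l q f g / Q1_den l f g" and "q1' \<equiv> Q1_num l q1 f1 g1 / Q1_den l f1 g1"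
    and "D' \<equiv> (site.U_num_deriv D df (cnj df) dg (cnj dg) * site.U_den
                - site.U_num * site.U_den_deriv D df (cnj df) dg (cnj dg)) / site.U_den^2"
  shows "mtm_lhs1 \<i> (complex_of_real h) u' r' (cnj r') r1' (cnj r1') q' (cnj q') q1' (cnj q1') D' = 0
       \<and> mtm_lhs2 \<i> (complex_of_real h) u' (cnj u') q' q1' = 0
       \<and> mtm_lhs3 \<i> (complex_of_real h) u' (cnj u') r' r1' = 0"
proof -
  have j: "\<i> * \<i> = (-1::complex)" by simp
  note hc = site_nonzero(1) and lb = site_nonzero(2) and S = site_nonzero(3,4)
  note eqs = conjunct1[OF mtm] conjunct1[OF conjunct2[OF mtm]] conjunct2[OF conjunct2[OF mtm]]
  note site_values = transformed_site_values[OF nonzero(1,2,4), folded u'_def r'_def q'_def]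
  note next_values =
    transformed_next_site_values[OF eqs(2,3) step nonzero(3,5), folded r1'_def q1'_def]
  note time = time_derivatives[OF eqs deriv]
  have eq3': "mtm_lhs3 \<i> (complex_of_real h) u' (cnj u') r' r1' = 0"
    unfolding site_values(6) unfolding site_values(5,7) next_values(3)
    by (rule site.darboux_eq3[OF j S site_values(1-3) next_values(1)])
  have eq2': "mtm_lhs2 \<i> (complex_of_real h) u' (cnj u') q' q1' = 0"
    unfolding site_values(6) unfolding site_values(5,9) next_values(4)
    by (rule site.darboux_eq2[OF j hc l_nonzero lb S site_values(1,2,4) next_values(2)])
  have "4*\<i>*D' + mtm_site.T \<i> (complex_of_real h) u' r' (cnj r') q' (cnj q') / complex_of_real h = 0"
    unfolding site_values(8,10) unfolding D'_def site_values(5,7,9)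
    by (rule site.darboux_eq1[OF j hc l_nonzero lb site_values(1,3,4) time])
  moreover have "mtm_lhs1 \<i> (complex_of_real h) u' r' (cnj r') r1' (cnj r1') q' (cnj q') q1' (cnj q1') D'
      = 4*\<i>*D' + mtm_site.T \<i> (complex_of_real h) u' r' (cnj r') q' (cnj q') / complex_of_real h"
    by (rule mtm_site.mtm_lhs1_reduced[OF j hc mtm_S_nonzero eq3' mtm_lhs3_conj[OF eq3']
          eq2' mtm_lhs2_conj[OF eq2']])
  ultimately show ?thesis
    using eq2' eq3' by simp
qed

end

lemma has_vector_derivative_quotient:
  fixes N D :: "real \<Rightarrow> 'a::real_normed_field"
  assumes "(N has_vector_derivative N') (at t)" "(D has_vector_derivative D') (at t)" "D t \<noteq> 0"
  shows "((\<lambda>s. N s / D s) has_vector_derivative (N' * D t - N t * D') / (D t)^2) (at t)"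
proof -
  have "((\<lambda>s. N s / D s) has_derivative
          (\<lambda>x. ((x *\<^sub>R N') * D t - N t * (x *\<^sub>R D')) / (D t * D t))) (at t)"
    using has_derivative_divide'[OF assms(1,2)[unfolded has_vector_derivative_def] assms(3)] .
  moreover have "(\<lambda>x. ((x *\<^sub>R N') * D t - N t * (x *\<^sub>R D')) / (D t * D t))
      = (\<lambda>x. x *\<^sub>R ((N' * D t - N t * D') / (D t)^2))"
    by (rule ext) (simp add: scaleR_conv_of_real field_simps power2_eq_square)
  ultimately show ?thesis
    unfolding has_vector_derivative_def by simp
qed

lemma U_num_U_den_has_vector_derivative:
  fixes u f fb g gb :: "real \<Rightarrow> complex"
  assumes "(u has_vector_derivative du) (at t)"
    and "(f has_vector_derivative df) (at t)" "(fb has_vector_derivative dfb) (at t)"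
    and "(g has_vector_derivative dg) (at t)" "(gb has_vector_derivative dgb) (at t)"
  shows "((\<lambda>s. mtm_site.U_num j h l lb (u s) (f s) (fb s) (g s) (gb s)) has_vector_derivative
           mtm_site.U_num_deriv j h l lb (u t) (f t) (fb t) (g t) (gb t) du df dfb dg dgb) (at t)"
    and "((\<lambda>s. mtm_site.U_den j h l lb (u s) (f s) (fb s) (g s) (gb s)) has_vector_derivative
           mtm_site.U_den_deriv j h l lb (u t) (f t) (fb t) (g t) (gb t) du df dfb dg dgb) (at t)"
  unfolding mtm_site.U_num_def mtm_site.U_num_deriv_def mtm_site.U_den_def mtm_site.U_den_deriv_def
  by (rule has_vector_derivative_eq_rhs, (rule derivative_intros assms)+, algebra)+

lemma U1_has_vector_derivative:
  fixes u f g :: "real \<Rightarrow> complex"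
  assumes u: "(u has_vector_derivative du) (at t)"
    and f: "(f has_vector_derivative df) (at t)" and g: "(g has_vector_derivative dg) (at t)"
    and den: "U1_den h l (u t) (f t) (g t) \<noteq> 0"
  defines "U_num_t \<equiv> mtm_site.U_num \<i> (complex_of_real h) l (cnj l) (u t) (f t) (cnj (f t)) (g t) (cnj (g t))"
    and "U_den_t \<equiv> mtm_site.U_den \<i> (complex_of_real h) l (cnj l) (u t) (f t) (cnj (f t)) (g t) (cnj (g t))"
  shows "((\<lambda>s. U1_num h l (u s) (f s) (g s) / U1_den h l (u s) (f s) (g s)) has_vector_derivative
           (mtm_site.U_num_deriv \<i> (complex_of_real h) l (cnj l) (u t) (f t) (cnj (f t)) (g t) (cnj (g t))
              du df (cnj df) dg (cnj dg) * U_den_t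
            - U_num_t * mtm_site.U_den_deriv \<i> (complex_of_real h) l (cnj l) (u t) (f t) (cnj (f t)) (g t) (cnj (g t))
              du df (cnj df) dg (cnj dg)) / U_den_t^2) (at t)"
proof -
  have fb: "((\<lambda>s. cnj (f s)) has_vector_derivative cnj df) (at t)"
    and gb: "((\<lambda>s. cnj (g s)) has_vector_derivative cnj dg) (at t)"
    by (rule has_vector_derivative_cnj[OF f], rule has_vector_derivative_cnj[OF g])
  show ?thesis
    unfolding darboux_quantities_eq U_num_t_def U_den_t_def
    using has_vector_derivative_quotient[OF U_num_U_den_has_vector_derivative[OF u f fb g gb]] den
    by (simp add: darboux_quantities_eq)
qed

lemma R1_Q1_differentiable:
  fixes r q f g :: "real \<Rightarrow> complex"
  assumes r: "r differentiable (at t)" and q: "q differentiable (at t)"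
    and f: "f differentiable (at t)" and g: "g differentiable (at t)"
  shows "R1_den l (f t) (g t) \<noteq> 0 \<Longrightarrow>
           (\<lambda>s. R1_num l (r s) (f s) (g s) / R1_den l (f s) (g s)) differentiable (at t)"
    and "Q1_den l (f t) (g t) \<noteq> 0 \<Longrightarrow>
           (\<lambda>s. Q1_num l (q s) (f s) (g s) / Q1_den l (f s) (g s)) differentiable (at t)"
proof -
  have fb: "(\<lambda>s. cnj (f s)) differentiable (at t)" and gb: "(\<lambda>s. cnj (g s)) differentiable (at t)"
    using f g has_vector_derivative_cnj differentiableI_vector vector_derivative_works by blast+
  show "R1_den l (f t) (g t) \<noteq> 0 \<Longrightarrow>
           (\<lambda>s. R1_num l (r s) (f s) (g s) / R1_den l (f s) (g s)) differentiable (at t)"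
    unfolding darboux_quantities_eq mtm_site.R_num_def mtm_site.R_den_def
    by (rule differentiable_divide, (rule derivative_intros r f fb g gb)+)
  show "Q1_den l (f t) (g t) \<noteq> 0 \<Longrightarrow>
           (\<lambda>s. Q1_num l (q s) (f s) (g s) / Q1_den l (f s) (g s)) differentiable (at t)"
    unfolding darboux_quantities_eq mtm_site.Q_num_def mtm_site.R_den_def
    by (rule differentiable_divide, (rule derivative_intros q f fb g gb)+)
qed

theorem theorem1:
  fixes h :: real and l1 :: complex
    and U R Q f g :: "int \<Rightarrow> real \<Rightarrow> complex"
  assumes hpos: "h > 0"
    and l1nz: "l1 \<noteq> 0"
    and sol: "mtm_solution h U R Q"
    and lax: "lax_solution h U R Q l1 f g"
    and nonzero: "\<exists>n t. f n t \<noteq> 0 \<or> g n t \<noteq> 0"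
  defines "U1 \<equiv> \<lambda>n t. U1_num h l1 (U n t) (f n t) (g n t) / U1_den h l1 (U n t) (f n t) (g n t)"
    and "R1 \<equiv> \<lambda>n t. R1_num l1 (R n t) (f n t) (g n t) / R1_den l1 (f n t) (g n t)"
    and "Q1 \<equiv> \<lambda>n t. Q1_num l1 (Q n t) (f n t) (g n t) / Q1_den l1 (f n t) (g n t)"
  shows "\<forall>n t.
           U1_den h l1 (U n t) (f n t) (g n t) \<noteq> 0
         \<and> R1_den l1 (f n t) (g n t) \<noteq> 0 \<and> R1_den l1 (f (n+1) t) (g (n+1) t) \<noteq> 0
         \<and> Q1_den l1 (f n t) (g n t) \<noteq> 0 \<and> Q1_den l1 (f (n+1) t) (g (n+1) t) \<noteq> 0
         \<longrightarrow> U1 n differentiable (at t) \<and> R1 n differentiable (at t) \<and> Q1 n differentiable (at t)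
           \<and> mtm_eqs h U1 R1 Q1 n t (vector_derivative (U1 n) (at t))"
proof (intro allI impI)
  fix n t
  assume dens: "U1_den h l1 (U n t) (f n t) (g n t) \<noteq> 0
         \<and> R1_den l1 (f n t) (g n t) \<noteq> 0 \<and> R1_den l1 (f (n+1) t) (g (n+1) t) \<noteq> 0
         \<and> Q1_den l1 (f n t) (g n t) \<noteq> 0 \<and> Q1_den l1 (f (n+1) t) (g (n+1) t) \<noteq> 0"
  interpret mtm_complex_site h l1 "U n t" "R n t" "Q n t" "f n t" "g n t"
    using hpos l1nz by unfold_locales
  have U: "(U n has_vector_derivative vector_derivative (U n) (at t)) (at t)"
    and R: "R n differentiable (at t)" and Q: "Q n differentiable (at t)"
    and mtm: "mtm_eqs h U R Q n t (vector_derivative (U n) (at t))"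
    using sol vector_derivative_works unfolding mtm_solution_def by blast+
  have step: "f (n+1) t = N11 h (U n t) l1 * f n t + N12 h (U n t) l1 * g n t"
      "g (n+1) t = N21 h (U n t) l1 * f n t + N22 h (U n t) l1 * g n t"
    and f: "(f n has_vector_derivative P11 (R n t) (Q n t) l1 * f n t + P12 (R n t) (Q n t) l1 * g n t) (at t)"
    and g: "(g n has_vector_derivative P21 (R n t) (Q n t) l1 * f n t + P22 (R n t) (Q n t) l1 * g n t) (at t)"
    using lax unfolding lax_solution_def by blast+
  have U1_fun: "U1 n = (\<lambda>s. U1_num h l1 (U n s) (f n s) (g n s) / U1_den h l1 (U n s) (f n s) (g n s))"
    unfolding U1_def ..
  note U1' = U1_has_vector_derivative[OF U f g conjunct1[OF dens], folded U1_fun]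
  have "R1 n differentiable (at t)" "Q1 n differentiable (at t)"
    using R1_Q1_differentiable[OF R Q differentiableI_vector[OF f] differentiableI_vector[OF g]] dens
    unfolding R1_def Q1_def by auto
  moreover have "mtm_eqs h U1 R1 Q1 n t (vector_derivative (U1 n) (at t))"
    using darboux_site[OF mtm[unfolded mtm_eqs_iff] step refl refl] dens
    unfolding vector_derivative_at[OF U1'] unfolding mtm_eqs_iff U1_def R1_def Q1_def by auto
  ultimately show "U1 n differentiable (at t) \<and> R1 n differentiable (at t) \<and> Q1 n differentiable (at t)
           \<and> mtm_eqs h U1 R1 Q1 n t (vector_derivative (U1 n) (at t))"
    using differentiableI_vector[OF U1'] by blast
qed

end
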